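(* Let $q$ be a power of $2$, let $b\in\mathbb{F}_q$ with $b\ne0$, and let $n\ge2$ be an integer. Let $r\ge0$ be such that $2^r$ divides $n+1$ but $2^{r+1}$ does not, and let $m\ge0$ be defined by $n+1=2^r(m+1)$. Assume $r\ge1$ and $\gcd(m+1,q^2-1)=1$. Then $\hat C_n(a,b)$ is LCD for every $a\in\mathbb{F}_q\setminus\{1\}$.
   Context: For $a,b\in\mathbb{F}_q$ and $n\ge 2$, $\hat T_n(a,b)$ denotes the $n\times n$ symmetric tridiagonal Toeplitz matrix over $\mathbb{F}_q$ with all diagonal entries equal to $a$, all entries on the first super- and sub-diagonals equal to $b$, and all other entries $0$. $\hat C_n(a,b)$ is the $[2n,n]$ linear code over $\mathbb{F}_q$ with generator matrix $[I_n\mid \hat T_n(a,b)]$. A linear code $C$ is LCD if $C\cap C^\perp=\{0\}$ (Euclidean dual). *)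

theory Defs
  imports "Jordan_Normal_Form.Matrix"
begin

definition tridiag_toeplitz :: "nat \<Rightarrow> 'a::field \<Rightarrow> 'a \<Rightarrow> 'a mat" where
  "tridiag_toeplitz n a b = mat n n (\<lambda>(i,j). if i = j then a
        else if i = j + 1 \<or> j = i + 1 then b else 0)"

definition gen_mat :: "nat \<Rightarrow> 'a::field \<Rightarrow> 'a \<Rightarrow> 'a mat" where
  "gen_mat n a b = mat n (2*n) (\<lambda>(i,j). if j < n then (if i = j then 1 else 0)
        else tridiag_toeplitz n a b $$ (i, j - n))"

definition code_of :: "'a::field mat \<Rightarrow> 'a vec set" where
  "code_of G = {transpose_mat G *\<^sub>v u | u. u \<in> carrier_vec (dim_row G)}"

definition dual_code :: "nat \<Rightarrow> 'a::field vec set \<Rightarrow> 'a vec set" where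
  "dual_code len C = {y \<in> carrier_vec len. \<forall>x\<in>C. x \<bullet> y = 0}"

definition is_LCD :: "nat \<Rightarrow> 'a::field vec set \<Rightarrow> bool" where
  "is_LCD len C \<longleftrightarrow> C \<inter> dual_code len C = {0\<^sub>v len}"

definition C_hat :: "nat \<Rightarrow> 'a::field \<Rightarrow> 'a \<Rightarrow> 'a vec set" where
  "C_hat n a b = code_of (gen_mat n a b)"

end

(*
  In characteristic 2 the Gram matrix of the generator matrix [I | T] is
  I + T^2 = (T + I)^2, and T + I is the tridiagonal Toeplitz matrix with diagonal
  c = a + 1.  A kernel vector w of that matrix satisfies w_(j+2) = x w_(j+1) + w_j with
  x = c / b, hence w_j = w_0 F_(j+1)(x) for the Fibonacci polynomials F, and the last row
  forces w_0 F_(n+1)(x) = 0.  So the code is LCD as soon as F_(n+1)(x) <> 0.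

  Modulo f = X^2 + x X + 1 one has X^N = F_(N-1)(x) + F_N(x) X, so F_N(x) = 0 together
  with Cassini's identity gives X^N = 1 mod f.  Since x <> 0, the Frobenius map on
  F_q[X]/(f) shows X^(q^2) = X mod f, and gcd(N, q^2 - 1) = 1 then yields X = 1 mod f,
  which is absurd.
*)

theory Submission
  imports Defs "HOL-Computational_Algebra.Polynomial" "HOL-Computational_Algebra.Primes"
    "HOL-Number_Theory.Cong"
begin

lemma power_card_eq_self:
  fixes x :: "'a::{field,finite}"
  shows "x ^ card (UNIV :: 'a set) = x"
proof (cases "x = 0")
  case False
  have "x * (\<Prod>y\<in>UNIV-{0}. x * y) = x * x ^ (card (UNIV :: 'a set) - 1) * \<Prod>(UNIV-{0})"
    by (simp add: prod.distrib mult_ac card_Diff_singleton)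
  also have "x * x ^ (card (UNIV :: 'a set) - 1) = x ^ card (UNIV :: 'a set)"
    using finite_UNIV_card_ge_0[where 'a='a] by (simp flip: power_Suc)
  also have "(\<Prod>y\<in>UNIV-{0}. x * y) = (\<Prod>y\<in>UNIV-{0}. y)"
    by (rule prod.reindex_bij_witness[of _ "\<lambda>y. y / x" "\<lambda>y. x * y"]) (use False in auto)
  finally show ?thesis
    by simp
qed (use finite_UNIV_card_ge_0[where 'a='a] in auto)

lemma even_card_if_card_power_of_2:
  assumes "card (UNIV :: 'a::{field,finite} set) = 2 ^ k"
  shows "even (card (UNIV :: 'a set))"
proof -
  have "card (UNIV :: 'a set) \<ge> 2"
    using card_mono[of UNIV "{0::'a, 1}"] by simp
  then show ?thesis
    using assms by (cases k) auto
qed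

lemma CHAR_eq_2_if_card_power_of_2:
  assumes "card (UNIV :: 'a::{field,finite} set) = 2 ^ k"
  shows "CHAR('a) = 2"
proof -
  have "(-1::'a) = 1"
    using power_card_eq_self[of "-1::'a"] even_card_if_card_power_of_2[OF assms] by simp
  then have "of_nat 2 = (0::'a)"
    by (simp add: eq_neg_iff_add_eq_0)
  then show ?thesis
    by (intro CHAR_eq_posI) (auto simp: less_2_cases_iff)
qed

lemma two_eq_0_if_CHAR_2: "CHAR('a::semiring_1) = 2 \<Longrightarrow> (2::'a) = 0"
  by (metis of_nat_CHAR of_nat_numeral)

lemma minus_eq_self_if_CHAR_2:
  assumes "CHAR('a::ring_1) = 2" shows "- x = (x::'a)"
proof -
  have "x + x = 0"
    using two_eq_0_if_CHAR_2[OF assms] by (metis mult_2 mult_zero_left)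
  then show ?thesis
    by (simp add: neg_eq_iff_add_eq_0)
qed

lemma poly_power_card_eq_pcompose:
  fixes p :: "'a::{field,finite} poly"
  assumes "card (UNIV :: 'a set) = CHAR('a) ^ k"
  shows "p ^ card (UNIV :: 'a set) = pcompose p ([:0,1:] ^ card (UNIV :: 'a set))"
proof (induction p)
  case 0
  then show ?case by (simp add: finite_UNIV_card_ge_0)
next
  case (pCons c p)
  have "prime CHAR('a poly)"
    using prime_CHAR_semidom[OF finite_imp_CHAR_pos[where 'a='a]] by simp
  moreover have "pCons c p = [:c:] + [:0,1:] * p"
    by simp
  ultimately have "pCons c p ^ card (UNIV :: 'a set)
      = [:c:] ^ card (UNIV :: 'a set) + ([:0,1:] * p) ^ card (UNIV :: 'a set)"
    using assms by (metis freshmans_dream' semiring_char_poly)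
  then show ?case
    using pCons.IH by (simp only: pcompose_pCons poly_const_pow power_card_eq_self power_mult_distrib)
qed

lemma cong_pcompose:
  fixes p :: "'a::field poly"
  assumes "[A = B] (mod m)"
  shows "[pcompose p A = pcompose p B] (mod m)"
  by (induction p) (simp_all add: pcompose_pCons cong_add cong_mult assms)

lemma linear_poly_eq_0_if_dvd:
  fixes f :: "'a::field poly"
  assumes "degree f \<ge> 2" and "f dvd [:c, d:]"
  shows "c = 0 \<and> d = 0"
proof (rule ccontr)
  assume "\<not> (c = 0 \<and> d = 0)"
  then have "degree f \<le> degree [:c, d:]"
    by (intro dvd_imp_degree_le[OF assms(2)]) simp
  then show False
    using assms(1) by (simp split: if_splits)
qed

lemma degree_le_1_eq_pCons:
  fixes p :: "'a::zero poly"
  assumes "degree p \<le> 1"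
  shows "p = [:coeff p 0, coeff p 1:]"
proof (rule poly_eqI)
  fix i
  show "coeff p i = coeff [:coeff p 0, coeff p 1:] i"
    using assms coeff_eq_0[of p i] by (cases i; cases "i - 1") (auto simp: coeff_pCons)
qed

lemma X_power_card_cong_linear:
  fixes x :: "'a::{field,finite}"
  assumes q: "card (UNIV :: 'a set) = 2 ^ k" and x: "x \<noteq> 0"
  obtains \<beta> where "[[:0, 1:] ^ card (UNIV :: 'a set) = [:\<beta>, 1:]] (mod [:1, x, 1:])"
proof -
  let ?q = "card (UNIV :: 'a set)" and ?X = "[:0, 1::'a:]" and ?f = "[:1, x, 1:]"
  have two: "(2::'a) = 0"
    using CHAR_eq_2_if_card_power_of_2[OF q] by (rule two_eq_0_if_CHAR_2)
  define R where "R = ?X ^ ?q mod ?f"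
  have XR: "[?X ^ ?q = R] (mod ?f)"
    by (simp add: R_def)
  have "degree R \<le> 1"
    using degree_mod_less[of ?f "?X ^ ?q"] by (auto simp: R_def)
  then obtain \<alpha> \<beta> where R: "R = [:\<beta>, \<alpha>:]"
    using degree_le_1_eq_pCons by blast
  have "[pcompose ?f R = pcompose ?f (?X ^ ?q)] (mod ?f)"
    using cong_pcompose[OF XR] by (rule cong_sym)
  also have "pcompose ?f (?X ^ ?q) = ?f ^ ?q"
    using q CHAR_eq_2_if_card_power_of_2[OF q] by (intro poly_power_card_eq_pcompose[symmetric]) simp
  also have "[?f ^ ?q = 0] (mod ?f)"
    by (simp add: cong_0_iff finite_UNIV_card_ge_0)
  finally have "?f dvd pcompose ?f R - smult (\<alpha> * \<alpha>) ?f"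
    by (intro dvd_diff dvd_smult dvd_refl) (simp add: cong_0_iff)
  also have "pcompose ?f R - smult (\<alpha> * \<alpha>) ?f
      = [:1 + x * \<beta> + \<beta> * \<beta> - \<alpha> * \<alpha>, x * \<alpha> + 2 * \<alpha> * \<beta> - \<alpha> * \<alpha> * x:]"
    unfolding R by (simp add: pcompose_pCons algebra_simps)
  finally have "1 + x * \<beta> + \<beta> * \<beta> - \<alpha> * \<alpha> = 0
      \<and> x * \<alpha> + 2 * \<alpha> * \<beta> - \<alpha> * \<alpha> * x = 0"
    by (rule linear_poly_eq_0_if_dvd[rotated]) simp
  then have c0: "1 + x * \<beta> + \<beta> * \<beta> = \<alpha> * \<alpha>" and c1: "x * (\<alpha> * (1 - \<alpha>)) = 0"
    using two by (auto simp: algebra_simps)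
  have "\<alpha> \<noteq> 0" \<comment> \<open>otherwise \<open>\<beta>\<close> and \<open>\<beta> + x\<close> are roots of \<open>f\<close>, but \<open>X^q = \<beta>\<close> mod \<open>f\<close>\<close>
  proof
    assume \<alpha>0: "\<alpha> = 0"
    have "?f dvd ?X ^ ?q - [:\<beta>:]"
      using XR by (simp add: R \<alpha>0 cong_iff_dvd_diff)
    moreover have "poly ?f (\<beta> + x) = (1 + x * \<beta> + \<beta> * \<beta>) + 2 * (x * \<beta> + x * x)"
      by (simp add: algebra_simps)
    then have "poly ?f (\<beta> + x) = 0"
      using c0 \<alpha>0 two by (simp add: add.assoc)
    ultimately have "poly (?X ^ ?q - [:\<beta>:]) (\<beta> + x) = 0"
      by (metis dvdE mult_zero_left poly_mult)
    then show False
      using x by (simp add: power_card_eq_self)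
  qed
  with c1 x have "\<alpha> = 1"
    by simp
  with XR R show thesis
    by (intro that) simp
qed

lemma X_power_card_square_cong:
  fixes x :: "'a::{field,finite}"
  assumes q: "card (UNIV :: 'a set) = 2 ^ k" and x: "x \<noteq> 0"
  shows "[[:0, 1:] ^ (card (UNIV :: 'a set) ^ 2) = [:0, 1:]] (mod [:1, x, 1:])"
proof -
  let ?q = "card (UNIV :: 'a set)" and ?X = "[:0, 1::'a:]" and ?f = "[:1, x, 1:]"
  obtain \<beta> where XR: "[?X ^ ?q = [:\<beta>, 1:]] (mod ?f)"
    using X_power_card_cong_linear[OF q x] .
  have "?X ^ (?q ^ 2) = (?X ^ ?q) ^ ?q"
    by (simp add: power2_eq_square power_mult)
  also have "[\<dots> = [:\<beta>, 1:] ^ ?q] (mod ?f)"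
    using XR by (rule cong_pow)
  also have "[:\<beta>, 1:] ^ ?q = pcompose [:\<beta>, 1:] (?X ^ ?q)"
    using q CHAR_eq_2_if_card_power_of_2[OF q] by (intro poly_power_card_eq_pcompose) simp
  also have "[\<dots> = pcompose [:\<beta>, 1:] [:\<beta>, 1:]] (mod ?f)"
    using XR by (rule cong_pcompose)
  also have "pcompose [:\<beta>, 1:] [:\<beta>, 1:] = ?X"
    using two_eq_0_if_CHAR_2[OF CHAR_eq_2_if_card_power_of_2[OF q]]
    by (simp add: pcompose_pCons flip: mult_2)
  finally show ?thesis .
qed

fun fib_poly :: "'a::comm_semiring_1 \<Rightarrow> nat \<Rightarrow> 'a" where
  "fib_poly x 0 = 0"
| "fib_poly x (Suc 0) = 1"
| "fib_poly x (Suc (Suc k)) = x * fib_poly x (Suc k) + fib_poly x k"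

lemma fib_poly_cassini:
  fixes x :: "'a::comm_ring_1"
  shows "fib_poly x (Suc k) ^ 2 - fib_poly x (Suc (Suc k)) * fib_poly x k = (-1) ^ k"
proof (induction k)
  case 0
  then show ?case by simp
next
  case (Suc k)
  have "fib_poly x (Suc (Suc k)) ^ 2 - fib_poly x (Suc (Suc (Suc k))) * fib_poly x (Suc k)
      = - (fib_poly x (Suc k) ^ 2 - fib_poly x (Suc (Suc k)) * fib_poly x k)"
    by (simp add: power2_eq_square algebra_simps)
  then show ?case
    by (simp only: Suc.IH power_Suc mult_minus1)
qed

lemma X_power_cong_fib_poly:
  fixes x :: "'a::field"
  shows "[[:0, 1:] ^ Suc k = [:fib_poly x k, fib_poly x (Suc k):]] (mod [:-1, -x, 1:])"
proof (induction k)
  case 0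
  then show ?case by simp
next
  case (Suc k)
  let ?F = "fib_poly x"
  have "[:0, 1:] ^ Suc (Suc k) = [:0, 1:] * [:0, 1:] ^ Suc k"
    by simp
  also have "[\<dots> = [:0, 1:] * [:?F k, ?F (Suc k):]] (mod [:-1, -x, 1:])"
    using Suc.IH by (rule cong_scalar_left)
  also have "[:0, 1:] * [:?F k, ?F (Suc k):]
      = [:?F (Suc k), ?F (Suc (Suc k)):] + smult (?F (Suc k)) [:-1, -x, 1:]"
    by (simp add: algebra_simps)
  also have "[\<dots> = [:?F (Suc k), ?F (Suc (Suc k)):]] (mod [:-1, -x, 1:])"
    unfolding cong_iff_dvd_diff by (metis add_diff_cancel_left' dvd_refl dvd_smult)
  finally show ?case .
qed

lemma X_power_cong_1_if_fib_poly_eq_0: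
  fixes x :: "'a::field"
  assumes char: "CHAR('a) = 2" and FN: "fib_poly x N = 0"
  shows "[[:0, 1:] ^ N = 1] (mod [:1, x, 1:])"
proof -
  have minus: "- y = y" for y :: 'a
    using char by (rule minus_eq_self_if_CHAR_2)
  consider "N = 0" | "N = 1" | M where "N = Suc (Suc M)"
    by (metis One_nat_def not0_implies_Suc)
  then show ?thesis
  proof cases
    case 3
    have "fib_poly x (Suc M) ^ 2 = 1"
      using fib_poly_cassini[of x M] FN minus[of 1] by (simp add: 3)
    then have F: "fib_poly x (Suc M) = 1"
      using minus[of 1] by (simp add: power2_eq_1_iff)
    have "[[:0, 1:] ^ N = [:fib_poly x (Suc M), fib_poly x N:]] (mod [:-1, -x, 1:])"
      unfolding 3 by (rule X_power_cong_fib_poly)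
    then show ?thesis
      using F FN minus[of 1] minus[of x] by (simp add: one_pCons)
  qed (use FN in simp_all)
qed

lemma fib_poly_neq_0:
  fixes x :: "'a::{field,finite}"
  assumes q: "card (UNIV :: 'a set) = 2 ^ k" and x: "x \<noteq> 0" and N: "N > 0"
    and coprime: "coprime N (card (UNIV :: 'a set) ^ 2 - 1)"
  shows "fib_poly x N \<noteq> 0"
proof
  assume "fib_poly x N = 0"
  let ?q = "card (UNIV :: 'a set)" and ?X = "[:0, 1::'a:]" and ?f = "[:1, x, 1:]"
  have XN: "[?X ^ N = 1] (mod ?f)"
    using CHAR_eq_2_if_card_power_of_2[OF q] \<open>fib_poly x N = 0\<close>
    by (rule X_power_cong_1_if_fib_poly_eq_0)
  define Q where "Q = ?q ^ 2 - 1"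
  have "Q + 1 = ?q ^ 2"
    using finite_UNIV_card_ge_0[where 'a='a] by (simp add: Q_def)
  then have XQ: "[?X ^ (Q + 1) = ?X] (mod ?f)"
    using X_power_card_square_cong[OF q x] by simp
  have XQv: "[?X ^ (Q * v + 1) = ?X] (mod ?f)" for v
  proof (induction v)
    case 0
    then show ?case by simp
  next
    case (Suc v)
    have "?X ^ (Q * Suc v + 1) = ?X ^ Q * ?X ^ (Q * v + 1)"
      by (simp flip: power_add)
    also have "[\<dots> = ?X ^ Q * ?X] (mod ?f)"
      using Suc.IH by (rule cong_scalar_left)
    also have "?X ^ Q * ?X = ?X ^ (Q + 1)"
      by simp
    finally show ?case
      using XQ by (rule cong_trans)
  qed
  obtain u v where uv: "N * u = Q * v + 1"
    using bezout_nat[of N Q] N coprime by (auto simp: Q_def coprime_iff_gcd_eq_1)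
  have "[?X = ?X ^ (N * u)] (mod ?f)"
    unfolding uv using XQv by (rule cong_sym)
  also have "?X ^ (N * u) = (?X ^ N) ^ u"
    by (rule power_mult)
  also have "[\<dots> = 1 ^ u] (mod ?f)"
    using XN by (rule cong_pow)
  finally have "?f dvd ?X - 1"
    by (simp add: cong_iff_dvd_diff)
  also have "?X - 1 = [:-1, 1:]"
    by (simp add: one_pCons)
  finally show False
    using linear_poly_eq_0_if_dvd[of ?f "-1" 1] by simp
qed

lemma add_one_mat_square_if_CHAR_2:
  fixes A :: "'a::comm_ring_1 mat"
  assumes char: "CHAR('a) = 2" and A: "A \<in> carrier_mat n n"
  shows "(A + 1\<^sub>m n) * (A + 1\<^sub>m n) = 1\<^sub>m n + A * A"
proof -
  have AA: "A + A = 0\<^sub>m n n"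
    using A two_eq_0_if_CHAR_2[OF char] by (intro eq_matI) (auto simp flip: mult_2)
  have "(A + 1\<^sub>m n) * (A + 1\<^sub>m n) = A * (A + 1\<^sub>m n) + 1\<^sub>m n * (A + 1\<^sub>m n)"
    using A by (intro add_mult_distrib_mat) auto
  also have "A * (A + 1\<^sub>m n) = A * A + A"
    using A by (subst mult_add_distrib_mat) auto
  also have "1\<^sub>m n * (A + 1\<^sub>m n) = A + 1\<^sub>m n"
    using A by simp
  also have "A * A + A + (A + 1\<^sub>m n) = A * A + (A + (A + 1\<^sub>m n))"
    by (rule assoc_add_mat) (use A in auto)
  also have "A + (A + 1\<^sub>m n) = (A + A) + 1\<^sub>m n"
    by (rule assoc_add_mat[symmetric]) (use A in auto)
  finally show ?thesis
    using A by (simp add: AA comm_add_mat[of "A * A" n n])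
qed

lemma dim_tridiag_toeplitz [simp]:
  "dim_row (tridiag_toeplitz n a b) = n" "dim_col (tridiag_toeplitz n a b) = n"
  by (simp_all add: tridiag_toeplitz_def)

lemma tridiag_toeplitz_carrier [simp]: "tridiag_toeplitz n a b \<in> carrier_mat n n"
  by (simp add: carrier_matI)

lemma tridiag_toeplitz_add_1: "tridiag_toeplitz n (a + 1) b = tridiag_toeplitz n a b + 1\<^sub>m n"
  by (rule eq_matI) (auto simp: tridiag_toeplitz_def)

lemma tridiag_toeplitz_mult_vec_index:
  assumes w: "w \<in> carrier_vec n" and i: "i < n"
  shows "(tridiag_toeplitz n c b *\<^sub>v w) $ i
    = (if 0 < i then b * w $ (i - 1) else 0) + c * w $ i + (if i + 1 < n then b * w $ (i + 1) else 0)"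
proof -
  have "(tridiag_toeplitz n c b *\<^sub>v w) $ i
      = (\<Sum>j<n. (if j = i then c * w $ j else 0) + (if 0 < i \<and> j = i - 1 then b * w $ j else 0)
          + (if j = i + 1 then b * w $ j else 0))"
    using w i by (auto simp: scalar_prod_def tridiag_toeplitz_def atLeast0LessThan intro!: sum.cong)
  also have "\<dots> = (if 0 < i then b * w $ (i - 1) else 0) + c * w $ i + (if i + 1 < n then b * w $ (i + 1) else 0)"
    using i by (simp add: sum.distrib sum.delta)
  finally show ?thesis .
qed

lemma tridiag_toeplitz_kernel_eq_fib_poly:
  fixes b c :: "'a::field"
  assumes char: "CHAR('a) = 2" and b: "b \<noteq> 0"
    and w: "w \<in> carrier_vec n" and kernel: "tridiag_toeplitz n c b *\<^sub>v w = 0\<^sub>v n"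
    and j: "j < n"
  shows "w $ j = w $ 0 * fib_poly (c / b) (Suc j)"
proof -
  define x where "x = c / b"
  have c: "c = b * x"
    using b by (simp add: x_def)
  have flip: "y = z" if "z + y = 0" for y z :: 'a
    using that minus_eq_self_if_CHAR_2[OF char, of z] by (metis add.commute eq_neg_iff_add_eq_0)
  have row: "(if 0 < i then b * w $ (i - 1) else 0) + c * w $ i + (if i + 1 < n then b * w $ (i + 1) else 0) = 0"
    if "i < n" for i
    using tridiag_toeplitz_mult_vec_index[OF w that, of c b] kernel that by simp
  have w1: "w $ 1 = x * w $ 0" if "1 < n"
  proof -
    have "b * w $ 1 = b * (x * w $ 0)"
      by (rule flip) (use row[of 0] that in \<open>simp add: c mult.assoc\<close>)
    then show ?thesis
      using b by simp
  qed
  have step: "w $ Suc (Suc i) = x * w $ Suc i + w $ i" if "Suc (Suc i) < n" for i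
  proof -
    have "b * w $ Suc (Suc i) = b * w $ i + c * w $ Suc i"
      by (rule flip) (use row[of "Suc i"] that in simp)
    then have "b * w $ Suc (Suc i) = b * (x * w $ Suc i + w $ i)"
      unfolding c by (simp add: algebra_simps)
    then show ?thesis
      using b by simp
  qed
  show ?thesis
    using j unfolding x_def[symmetric]
  proof (induction j rule: less_induct)
    case (less j)
    consider "j = 0" | "j = 1" | i where "j = Suc (Suc i)"
      by (metis One_nat_def not0_implies_Suc)
    then show ?case
    proof cases
      case 3
      then have "w $ j = x * w $ Suc i + w $ i"
        using step[of i] less.prems by simp
      also have "\<dots> = x * (w $ 0 * fib_poly x (Suc (Suc i))) + w $ 0 * fib_poly x (Suc i)"
        using less.IH[of i] less.IH[of "Suc i"] less.prems 3 by simp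
      also have "\<dots> = w $ 0 * fib_poly x (Suc j)"
        unfolding 3 fib_poly.simps(3)[of x "Suc i"] by (simp add: algebra_simps)
      finally show ?thesis .
    qed (use w1 less.prems in simp_all)
  qed
qed

lemma tridiag_toeplitz_kernel_trivial:
  fixes b c :: "'a::field"
  assumes char: "CHAR('a) = 2" and b: "b \<noteq> 0" and n: "n \<ge> 2"
    and F: "fib_poly (c / b) (Suc n) \<noteq> 0"
    and w: "w \<in> carrier_vec n" and kernel: "tridiag_toeplitz n c b *\<^sub>v w = 0\<^sub>v n"
  shows "w = 0\<^sub>v n"
proof -
  have closed: "w $ j = w $ 0 * fib_poly (c / b) (Suc j)" if "j < n" for j
    using char b w kernel that by (rule tridiag_toeplitz_kernel_eq_fib_poly)
  obtain m where m: "n = Suc (Suc m)"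
    using n by (metis add_2_eq_Suc le_Suc_ex)
  have "w $ 0 * (b * fib_poly (c / b) (Suc n)) = b * w $ m + c * w $ Suc m"
    using closed[of m] closed[of "Suc m"] b by (simp add: m algebra_simps)
  also have "\<dots> = (tridiag_toeplitz n c b *\<^sub>v w) $ Suc m"
    using tridiag_toeplitz_mult_vec_index[OF w, of "Suc m" c b] by (simp add: m)
  also have "\<dots> = 0"
    using kernel by (simp add: m)
  finally have "w $ 0 = 0"
    using b F by simp
  then show ?thesis
    using w closed by (intro eq_vecI) auto
qed

lemma dim_gen_mat [simp]: "dim_row (gen_mat n a b) = n" "dim_col (gen_mat n a b) = 2 * n"
  by (simp_all add: gen_mat_def)

lemma gen_mat_carrier: "gen_mat n a b \<in> carrier_mat n (2 * n)"
  by (simp add: carrier_matI)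

lemma gen_mat_mult_transpose:
  "gen_mat n a b * transpose_mat (gen_mat n a b) = 1\<^sub>m n + tridiag_toeplitz n a b * tridiag_toeplitz n a b"
proof (rule eq_matI)
  let ?G = "gen_mat n a b" and ?T = "tridiag_toeplitz n a b"
  fix i j
  assume "i < dim_row (1\<^sub>m n + ?T * ?T)" and "j < dim_col (1\<^sub>m n + ?T * ?T)"
  then have i: "i < n" and j: "j < n"
    by simp_all
  define g where "g l = ?G $$ (i, l) * ?G $$ (j, l)" for l
  have "(?G * transpose_mat ?G) $$ (i, j) = (\<Sum>l\<in>{0..<n + n}. g l)"
    using i j by (simp add: scalar_prod_def g_def mult_2)
  also have "\<dots> = (\<Sum>l\<in>{0..<n}. g l) + (\<Sum>l\<in>{0..<n}. g (l + n))"
    by (simp add: sum.atLeastLessThan_concat[of 0 n "n + n", symmetric] sum.shift_bounds_nat_ivl[of g 0 n n, simplified])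
  also have "(\<Sum>l\<in>{0..<n}. g l) = (\<Sum>l\<in>{0..<n}. if l = i then (if i = j then 1 else 0) else 0)"
    using i j by (intro sum.cong) (auto simp: g_def gen_mat_def)
  also have "(\<Sum>l\<in>{0..<n}. g (l + n)) = (\<Sum>l\<in>{0..<n}. ?T $$ (i, l) * ?T $$ (l, j))"
    using i j by (intro sum.cong) (auto simp: g_def gen_mat_def tridiag_toeplitz_def)
  also have "(\<Sum>l\<in>{0..<n}. if l = i then (if i = j then 1 else 0) else 0) + (\<Sum>l\<in>{0..<n}. ?T $$ (i, l) * ?T $$ (l, j))
      = (1\<^sub>m n + ?T * ?T) $$ (i, j)"
    using i j by (simp add: scalar_prod_def)
  finally show "(?G * transpose_mat ?G) $$ (i, j) = (1\<^sub>m n + ?T * ?T) $$ (i, j)" .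
qed simp_all

lemma is_LCD_code_of_if_gram_kernel_trivial:
  fixes G :: "'a::field mat"
  assumes G: "G \<in> carrier_mat k len"
    and kernel: "\<And>u. u \<in> carrier_vec k \<Longrightarrow> (G * transpose_mat G) *\<^sub>v u = 0\<^sub>v k \<Longrightarrow> u = 0\<^sub>v k"
  shows "is_LCD len (code_of G)"
proof -
  have zero: "transpose_mat G *\<^sub>v 0\<^sub>v k = 0\<^sub>v len"
    using G by (intro eq_vecI) auto
  have "y = 0\<^sub>v len" if y: "y \<in> code_of G" and dual: "y \<in> dual_code len (code_of G)" for y
  proof -
    obtain u where u: "u \<in> carrier_vec k" and yu: "y = transpose_mat G *\<^sub>v u"
      using y G by (auto simp: code_of_def)
    have "(G * transpose_mat G) *\<^sub>v u = 0\<^sub>v k"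
    proof (rule eq_vecI)
      fix i
      assume "i < dim_vec (0\<^sub>v k :: 'a vec)"
      then have i: "i < k"
        by simp
      have "transpose_mat G *\<^sub>v unit_vec k i \<in> code_of G"
        using G by (auto simp: code_of_def)
      then have "0 = (transpose_mat G *\<^sub>v unit_vec k i) \<bullet> y"
        using dual by (simp add: dual_code_def)
      also have "\<dots> = unit_vec k i \<bullet> (G *\<^sub>v y)"
        using G dual by (intro transpose_vec_mult_scalar) (auto simp: dual_code_def)
      also have "\<dots> = ((G * transpose_mat G) *\<^sub>v u) $ i"
        using G u i by (simp add: yu)
      finally show "((G * transpose_mat G) *\<^sub>v u) $ i = 0\<^sub>v k $ i"
        using i by simp
    qed (use G in simp)
    then have "u = 0\<^sub>v k"
      using kernel u by blast
    then show ?thesis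
      using zero yu by simp
  qed
  moreover have "0\<^sub>v len \<in> code_of G"
    using G zero by (auto simp: code_of_def intro!: exI[of _ "0\<^sub>v k"])
  moreover have "0\<^sub>v len \<in> dual_code len (code_of G)"
    using G by (auto simp: dual_code_def code_of_def)
  ultimately show ?thesis
    unfolding is_LCD_def by blast
qed

lemma C_hat_is_LCD_if_fib_poly_neq_0:
  fixes a b :: "'a::field"
  assumes char: "CHAR('a) = 2" and b: "b \<noteq> 0" and n: "n \<ge> 2"
    and F: "fib_poly ((a + 1) / b) (Suc n) \<noteq> 0"
  shows "is_LCD (2 * n) (C_hat n a b)"
  unfolding C_hat_def
proof (rule is_LCD_code_of_if_gram_kernel_trivial[OF gen_mat_carrier])
  let ?T = "tridiag_toeplitz n (a + 1) b"
  have kernel: "w = 0\<^sub>v n" if "w \<in> carrier_vec n" and "?T *\<^sub>v w = 0\<^sub>v n" for w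
    using tridiag_toeplitz_kernel_trivial[OF char b n F that] .
  have gram: "gen_mat n a b * transpose_mat (gen_mat n a b) = ?T * ?T"
    using add_one_mat_square_if_CHAR_2[OF char tridiag_toeplitz_carrier[of n a b]]
    by (simp add: gen_mat_mult_transpose tridiag_toeplitz_add_1)
  fix u :: "'a vec"
  assume u: "u \<in> carrier_vec n" and "(gen_mat n a b * transpose_mat (gen_mat n a b)) *\<^sub>v u = 0\<^sub>v n"
  then have "?T *\<^sub>v (?T *\<^sub>v u) = 0\<^sub>v n"
    using assoc_mult_mat_vec[of ?T n n ?T n u] by (simp add: gram)
  then have "?T *\<^sub>v u = 0\<^sub>v n"
    by (rule kernel[rotated]) (use mult_mat_vec_carrier[OF tridiag_toeplitz_carrier u] in simp)
  then show "u = 0\<^sub>v n"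
    by (rule kernel[OF u])
qed

theorem corollary2p7:
  fixes b :: "'a::{field,finite}" and n r m :: nat
  assumes "\<exists>k. card (UNIV :: 'a set) = 2 ^ k"
    and "b \<noteq> 0"
    and "n \<ge> 2"
    and "2 ^ r dvd n + 1" and "\<not> 2 ^ (r + 1) dvd n + 1"
    and "n + 1 = 2 ^ r * (m + 1)"
    and "r \<ge> 1"
    and "gcd (m + 1) (card (UNIV :: 'a set) ^ 2 - 1) = 1"
  shows "\<forall>a::'a. a \<noteq> 1 \<longrightarrow> is_LCD (2 * n) (C_hat n a b)"
proof (intro allI impI)
  fix a :: 'a
  assume "a \<noteq> 1"
  obtain k where q: "card (UNIV :: 'a set) = 2 ^ k"
    using assms(1) by blast
  have char: "CHAR('a) = 2"
    using q by (rule CHAR_eq_2_if_card_power_of_2)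
  have "a + 1 \<noteq> 0"
    using \<open>a \<noteq> 1\<close> minus_eq_self_if_CHAR_2[OF char, of 1] by (metis eq_neg_iff_add_eq_0)
  \<comment> \<open>only the factorisation of \<open>n + 1\<close> and the gcd condition are needed, not \<open>r \<ge> 1\<close>\<close>
  have "odd (card (UNIV :: 'a set) ^ 2 - 1)"
    using even_card_if_card_power_of_2[OF q] finite_UNIV_card_ge_0[where 'a='a] by simp
  then have "coprime (2 ^ r) (card (UNIV :: 'a set) ^ 2 - 1)"
    by simp
  moreover have "coprime (m + 1) (card (UNIV :: 'a set) ^ 2 - 1)"
    using assms(8) by (rule coprime_iff_gcd_eq_1[THEN iffD2])
  ultimately have "coprime (n + 1) (card (UNIV :: 'a set) ^ 2 - 1)"
    unfolding assms(6) by (simp only: coprime_mult_left_iff)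
  then have "fib_poly ((a + 1) / b) (Suc n) \<noteq> 0"
    using fib_poly_neq_0[OF q] \<open>a + 1 \<noteq> 0\<close> assms(2) by simp
  then show "is_LCD (2 * n) (C_hat n a b)"
    using char assms(2,3) by (intro C_hat_is_LCD_if_fib_poly_neq_0)
qed

end
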